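(* For every $n\ge0$, $$\{\varphi(R(\tau)):\tau\in Y_n\}=\{P\cup K(P): P\in\mathrm{NCP}_n\}.$$
   Context: Planar binary trees: $Y_0=\{|\}$, $Y_n=\{\sigma\vee\tau:\sigma\in Y_k,\tau\in Y_l,k+l=n-1\}$, $\sigma\vee\tau$ being the tree whose root has left subtree $\sigma$ and right subtree $\tau$; $Y=\bigcup_nY_n$. $R:Y\to Y$ is defined by $R(|)=|$, $R(\sigma\vee\tau)=(|\vee R(\sigma))\vee R(\tau)$. $\mathrm{NCP}_n$ is the set of noncrossing partitions of $[n]=\{1,\dots,n\}$ ($\mathrm{NCP}_0=\{\emptyset\}$), ordered by refinement ($P\le Q$ if every block of $P$ lies in a block of $Q$). For $P\in\mathrm{NCP}_m$, $Q\in\mathrm{NCP}_l$: $P*Q\in\mathrm{NCP}_{m+l}$ is the concatenation ($Q$ shifted by $m$); $P\,\underline*\,Q$ is obtained from $P*Q$ by merging the block of $P$ containing $m$ with the block containing $m+l$ (with $\emptyset*Q=Q$, $\emptyset\,\underline*\,Q=Q$, $P\,\underline*\,\emptyset=P$). $|$ denotes the unique partition of $[1]$. For partitions $P,Q$ of $[n]$, $P\cup Q$ is the partition of $[2n]$ whose blocks are $\{2i-1:i\in V\}$ for $V\in P$ and $\{2i:i\in W\}$ for $W\in Q$. The Kreweras complement $K(P)$ of $P\in\mathrm{NCP}_n$ is the largest $Q\in\mathrm{NCP}_n$ such that $P\cup Q$ is noncrossing. The bijection $\varphi:Y\to\mathrm{NCP}$ is defined by $\varphi(|)=\emptyset$ and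 $\varphi(\sigma\vee\tau)=\varphi(\sigma)*(|\,\underline*\,\varphi(\tau))$; equivalently, labelling the vertices of $\tau\in Y_n$ by $1,\dots,n$ in left-to-right order (vertices of left subtree, root, vertices of right subtree), the blocks of $\varphi(\tau)$ are the classes of the equivalence relation generated by "$x$ is the right child of $y$". *)

theory Defs
  imports Main
begin

text \<open>Planar binary trees: Leaf is the tree |, Node s t is s \<or> t.\<close>
datatype ptree = Leaf | Node ptree ptree

fun nodes :: "ptree \<Rightarrow> nat" where
  "nodes Leaf = 0"
| "nodes (Node s t) = Suc (nodes s + nodes t)"

definition Y :: "nat \<Rightarrow> ptree set" where
  "Y n = {t. nodes t = n}"

fun R :: "ptree \<Rightarrow> ptree" where
  "R Leaf = Leaf"
| "R (Node s t) = Node (Node Leaf (R s)) (R t)"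

definition is_partition :: "nat \<Rightarrow> nat set set \<Rightarrow> bool" where
  "is_partition n P \<longleftrightarrow> (\<forall>B\<in>P. B \<noteq> {}) \<and>
     (\<forall>B\<in>P. \<forall>C\<in>P. B \<noteq> C \<longrightarrow> B \<inter> C = {}) \<and> \<Union>P = {1..n}"

definition noncrossing :: "nat set set \<Rightarrow> bool" where
  "noncrossing P \<longleftrightarrow> \<not> (\<exists>B\<in>P. \<exists>C\<in>P. B \<noteq> C \<and>
     (\<exists>a b c d. a < b \<and> b < c \<and> c < d \<and> a \<in> B \<and> c \<in> B \<and> b \<in> C \<and> d \<in> C))"

definition NCP :: "nat \<Rightarrow> nat set set set" where
  "NCP n = {P. is_partition n P \<and> noncrossing P}"

definition refines :: "nat set set \<Rightarrow> nat set set \<Rightarrow> bool" where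
  "refines P Q \<longleftrightarrow> (\<forall>B\<in>P. \<exists>C\<in>Q. B \<subseteq> C)"

definition shift :: "nat \<Rightarrow> nat set set \<Rightarrow> nat set set" where
  "shift m Q = (\<lambda>B. (\<lambda>x. x + m) ` B) ` Q"

definition concat :: "nat \<Rightarrow> nat set set \<Rightarrow> nat set set \<Rightarrow> nat set set" where
  "concat m P Q = P \<union> shift m Q"

definition blk :: "nat set set \<Rightarrow> nat \<Rightarrow> nat set" where
  "blk S x = (THE B. B \<in> S \<and> x \<in> B)"

definition ustar :: "nat \<Rightarrow> nat set set \<Rightarrow> nat \<Rightarrow> nat set set \<Rightarrow> nat set set" where
  "ustar m P l Q =
     (if P = {} then Q else if Q = {} then P else
      (let S = concat m P Q; B1 = blk S m; B2 = blk S (m + l)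
       in (S - {B1, B2}) \<union> {B1 \<union> B2}))"

definition bar :: "nat set set" where
  "bar = {{1}}"

fun phi :: "ptree \<Rightarrow> nat set set" where
  "phi Leaf = {}"
| "phi (Node s t) = concat (nodes s) (phi s) (ustar 1 bar (nodes t) (phi t))"

text \<open>P \<union> Q: interleaving partition of [2n].\<close>
definition interleave :: "nat set set \<Rightarrow> nat set set \<Rightarrow> nat set set" where
  "interleave P Q = (\<lambda>V. (\<lambda>i. 2 * i - 1) ` V) ` P \<union> (\<lambda>W. (\<lambda>i. 2 * i) ` W) ` Q"

definition kreweras :: "nat \<Rightarrow> nat set set \<Rightarrow> nat set set" where
  "kreweras n P = (THE Q. Q \<in> NCP n \<and> noncrossing (interleave P Q) \<and>
      (\<forall>Q'\<in>NCP n. noncrossing (interleave P Q') \<longrightarrow> refines Q' Q))"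

end

(*
  Partitions of [n] are handled through their same-block relations (blocks, same_block).
  The relation of phi (R t) only relates positions of equal parity, and its odd and even parts
  odd_rel t and even_rel t obey simple mutual recursions over t, so that
  phi (R t) = interleave P Q with P = blocks (odd_rel t), Q = blocks (even_rel t).
  Since phi (R t) is noncrossing, Q is compatible with P. Conversely, if P \<union> Q' is noncrossing,
  every pair j < k in a block of Q' encloses a union {j+1..k} of blocks of P, and by induction
  on t any such pair lies in a block of Q; hence Q = K(P). Finally every noncrossing partition
  of [n] is of the form blocks (odd_rel t) with t \<in> Y n: split off the block containing 1
  (for odd_rel) resp. n (for even_rel), which no other block crosses, and recurse on both sides.
*)
theory Submission
  imports Defs
begin

section \<open>Partitions as equivalence relations on [n]\<close>

type_synonym nrel = "nat \<Rightarrow> nat \<Rightarrow> bool"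

definition equiv_upto :: "nat \<Rightarrow> nrel \<Rightarrow> bool" where
  "equiv_upto n r \<longleftrightarrow> (\<forall>i j. r i j \<longrightarrow> 1 \<le> i \<and> i \<le> n \<and> 1 \<le> j \<and> j \<le> n) \<and>
     (\<forall>i. 1 \<le> i \<longrightarrow> i \<le> n \<longrightarrow> r i i) \<and> symp r \<and> transp r"

lemma equiv_uptoI:
  assumes "\<And>i j. r i j \<Longrightarrow> 1 \<le> i \<and> i \<le> n \<and> 1 \<le> j \<and> j \<le> n"
    and "\<And>i. 1 \<le> i \<Longrightarrow> i \<le> n \<Longrightarrow> r i i"
    and "\<And>i j. r i j \<Longrightarrow> r j i" and "\<And>i j k. r i j \<Longrightarrow> r j k \<Longrightarrow> r i k"
  shows "equiv_upto n r"
  using assms unfolding equiv_upto_def by (blast intro: sympI transpI)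

lemma equiv_upto_dom:
  assumes "equiv_upto n r" "r i j"
  shows "1 \<le> i" "i \<le> n" "1 \<le> j" "j \<le> n"
  using assms unfolding equiv_upto_def by simp_all

lemma equiv_upto_refl: "equiv_upto n r \<Longrightarrow> 1 \<le> i \<Longrightarrow> i \<le> n \<Longrightarrow> r i i"
  unfolding equiv_upto_def by blast

lemma equiv_upto_sym: "equiv_upto n r \<Longrightarrow> r i j \<Longrightarrow> r j i"
  unfolding equiv_upto_def by (simp add: sympD)

lemma equiv_upto_trans: "equiv_upto n r \<Longrightarrow> r i j \<Longrightarrow> r j k \<Longrightarrow> r i k"
  unfolding equiv_upto_def by (meson transpD)

lemma equiv_upto_sym_iff: "equiv_upto n r \<Longrightarrow> r i j \<longleftrightarrow> r j i"
  using equiv_upto_sym by metis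

lemma equiv_upto_class_eq: "equiv_upto n r \<Longrightarrow> r i k \<Longrightarrow> r i j \<longleftrightarrow> r k j"
  using equiv_upto_sym equiv_upto_trans by metis

lemma equiv_upto_0_iff: "equiv_upto 0 r \<longleftrightarrow> r = (\<lambda>_ _. False)"
  by (auto simp: equiv_upto_def fun_eq_iff intro: sympI transpI)

definition noncrossing_rel :: "nrel \<Rightarrow> bool" where
  "noncrossing_rel r \<longleftrightarrow> (\<forall>a b c d. a < b \<longrightarrow> b < c \<longrightarrow> c < d \<longrightarrow> r a c \<longrightarrow> r b d \<longrightarrow> r a b)"

lemma noncrossing_relD:
  "noncrossing_rel r \<Longrightarrow> a < b \<Longrightarrow> b < c \<Longrightarrow> c < d \<Longrightarrow> r a c \<Longrightarrow> r b d \<Longrightarrow> r a b"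
  unfolding noncrossing_rel_def by blast

lemma noncrossing_rel_inside:
  assumes r: "equiv_upto n r" "noncrossing_rel r"
    and xy: "r x y" "x < i" "i < y" and ij: "r i j" and not_xi: "\<not> r x i"
  shows "x < j \<and> j < y"
proof (rule ccontr)
  assume "\<not> (x < j \<and> j < y)"
  then consider "j < x" | "j = x" | "j = y" | "y < j" by linarith
  then have "r x i"
  proof cases
    case 1
    then have "r j x" using noncrossing_relD[OF r(2) 1 xy(2,3)] ij xy(1) equiv_upto_sym[OF r(1)]
      by blast
    then show ?thesis using ij by (blast intro: equiv_upto_sym[OF r(1)] equiv_upto_trans[OF r(1)])
  next
    case 4
    then show ?thesis using noncrossing_relD[OF r(2) xy(2,3) 4] ij xy(1) by blast
  qed (use ij xy(1) in \<open>blast intro: equiv_upto_sym[OF r(1)] equiv_upto_trans[OF r(1)]\<close>)+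
  with not_xi show False ..
qed

definition rel_concat :: "nat \<Rightarrow> nrel \<Rightarrow> nrel \<Rightarrow> nrel" where
  "rel_concat m r1 r2 i j \<longleftrightarrow> (i \<le> m \<and> j \<le> m \<and> r1 i j) \<or> (m < i \<and> m < j \<and> r2 (i - m) (j - m))"

definition bar_ustar_rel :: "nat \<Rightarrow> nrel \<Rightarrow> nrel" where
  "bar_ustar_rel l r i j \<longleftrightarrow> (i = 1 \<and> j = 1) \<or> (2 \<le> i \<and> 2 \<le> j \<and> r (i - 1) (j - 1)) \<or>
     (i = 1 \<and> 2 \<le> j \<and> r (j - 1) l) \<or> (j = 1 \<and> 2 \<le> i \<and> r (i - 1) l)"

lemma equiv_upto_rel_concat:
  assumes r1: "equiv_upto m r1" and r2: "equiv_upto l r2"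
  shows "equiv_upto (m + l) (rel_concat m r1 r2)"
proof (rule equiv_uptoI)
  show "rel_concat m r1 r2 i i" if "1 \<le> i" "i \<le> m + l" for i
    using that equiv_upto_refl[OF r1, of i] equiv_upto_refl[OF r2, of "i - m"]
    unfolding rel_concat_def by (cases "i \<le> m") auto
  show "1 \<le> i \<and> i \<le> m + l \<and> 1 \<le> j \<and> j \<le> m + l" if "rel_concat m r1 r2 i j" for i j
    using that equiv_upto_dom[OF r1, of i j] equiv_upto_dom[OF r2, of "i - m" "j - m"]
    unfolding rel_concat_def by auto
  show "rel_concat m r1 r2 j i" if "rel_concat m r1 r2 i j" for i j
    using that equiv_upto_sym[OF r1, of i j] equiv_upto_sym[OF r2, of "i - m" "j - m"]
    unfolding rel_concat_def by auto
  show "rel_concat m r1 r2 i k" if "rel_concat m r1 r2 i j" "rel_concat m r1 r2 j k" for i j k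
    using that equiv_upto_trans[OF r1, of i j k] equiv_upto_trans[OF r2, of "i - m" "j - m" "k - m"]
    unfolding rel_concat_def by auto
qed

lemma equiv_upto_bar_ustar_rel:
  assumes r: "equiv_upto l r"
  shows "equiv_upto (Suc l) (bar_ustar_rel l r)"
proof (rule equiv_uptoI)
  show "bar_ustar_rel l r i i" if "1 \<le> i" "i \<le> Suc l" for i
    using that equiv_upto_refl[OF r, of "i - 1"] unfolding bar_ustar_rel_def by (cases "i = 1") auto
  show "1 \<le> i \<and> i \<le> Suc l \<and> 1 \<le> j \<and> j \<le> Suc l" if "bar_ustar_rel l r i j" for i j
    using that equiv_upto_dom[OF r, of "i - 1" "j - 1"] equiv_upto_dom[OF r, of "i - 1" l]
      equiv_upto_dom[OF r, of "j - 1" l]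
    unfolding bar_ustar_rel_def by auto
  show "bar_ustar_rel l r j i" if "bar_ustar_rel l r i j" for i j
    using that equiv_upto_sym[OF r, of "i - 1" "j - 1"] unfolding bar_ustar_rel_def by auto
  show "bar_ustar_rel l r i k" if "bar_ustar_rel l r i j" "bar_ustar_rel l r j k" for i j k
    using that unfolding bar_ustar_rel_def
    by (elim disjE conjE) (simp_all, (blast intro: equiv_upto_trans[OF r] equiv_upto_sym[OF r])+)
qed

lemma noncrossing_rel_concat:
  assumes "noncrossing_rel r1" "noncrossing_rel r2"
  shows "noncrossing_rel (rel_concat m r1 r2)"
  unfolding noncrossing_rel_def
proof (intro allI impI)
  fix a b c d :: nat
  assume abcd: "a < b" "b < c" "c < d"
    and ac: "rel_concat m r1 r2 a c" and bd: "rel_concat m r1 r2 b d"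
  show "rel_concat m r1 r2 a b"
  proof (cases "c \<le> m")
    case True
    then have "r1 a c" "r1 b d" using ac bd abcd unfolding rel_concat_def by auto
    then show ?thesis using noncrossing_relD[OF assms(1) abcd] abcd True unfolding rel_concat_def
      by auto
  next
    case False
    then have "m < a" using ac unfolding rel_concat_def by auto
    then have "r2 (a - m) (c - m)" "r2 (b - m) (d - m)" using ac bd abcd unfolding rel_concat_def
      by auto
    moreover have "a - m < b - m" "b - m < c - m" "c - m < d - m" using abcd \<open>m < a\<close> by auto
    ultimately have "r2 (a - m) (b - m)" using noncrossing_relD[OF assms(2)] by blast
    then show ?thesis using abcd \<open>m < a\<close> unfolding rel_concat_def by auto
  qed
qed

lemma noncrossing_bar_ustar_rel:
  assumes r: "equiv_upto l r" "noncrossing_rel r"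
  shows "noncrossing_rel (bar_ustar_rel l r)"
  unfolding noncrossing_rel_def
proof (intro allI impI)
  fix a b c d :: nat
  assume abcd: "a < b" "b < c" "c < d"
    and ac: "bar_ustar_rel l r a c" and bd: "bar_ustar_rel l r b d"
  have "1 \<le> a" using ac unfolding bar_ustar_rel_def by auto
  then have bd': "r (b - 1) (d - 1)" using bd abcd unfolding bar_ustar_rel_def by auto
  show "bar_ustar_rel l r a b"
  proof (cases "a = 1")
    case True
    then have cl: "r (c - 1) l" using ac abcd unfolding bar_ustar_rel_def by auto
    have "r (b - 1) l"
    proof (cases "d - 1 = l")
      case False
      then have "b - 1 < c - 1" "c - 1 < d - 1" "d - 1 < l"
        using abcd equiv_upto_dom(4)[OF r(1) bd'] by auto
      then have "r (b - 1) (c - 1)" using noncrossing_relD[OF r(2)] bd' cl by blast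
      then show ?thesis using cl equiv_upto_trans[OF r(1)] by blast
    qed (use bd' in simp)
    then show ?thesis using True abcd unfolding bar_ustar_rel_def by auto
  next
    case False
    then have "2 \<le> a" using \<open>1 \<le> a\<close> by simp
    then have "r (a - 1) (c - 1)" using ac abcd unfolding bar_ustar_rel_def by auto
    moreover have "a - 1 < b - 1" "b - 1 < c - 1" "c - 1 < d - 1" using abcd \<open>2 \<le> a\<close> by auto
    ultimately have "r (a - 1) (b - 1)" using bd' noncrossing_relD[OF r(2)] by blast
    then show ?thesis using abcd \<open>2 \<le> a\<close> unfolding bar_ustar_rel_def by auto
  qed
qed

fun phi_rel :: "ptree \<Rightarrow> nrel" where
  "phi_rel Leaf = (\<lambda>_ _. False)"
| "phi_rel (Node s t) = rel_concat (nodes s) (phi_rel s) (bar_ustar_rel (nodes t) (phi_rel t))"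

text \<open>The restrictions of phi_rel (R t) to odd and to even positions (see phi_rel_R).\<close>

fun odd_rel :: "ptree \<Rightarrow> nrel" and even_rel :: "ptree \<Rightarrow> nrel" where
  "odd_rel Leaf = (\<lambda>_ _. False)"
| "odd_rel (Node s t) =
     rel_concat (Suc (nodes s)) (bar_ustar_rel (nodes s) (even_rel s)) (odd_rel t)"
| "even_rel Leaf = (\<lambda>_ _. False)"
| "even_rel (Node s t) = rel_concat (nodes s) (odd_rel s) (bar_ustar_rel (nodes t) (even_rel t))"

lemma equiv_upto_empty: "equiv_upto 0 (\<lambda>_ _. False)"
  by (simp add: equiv_upto_0_iff)

lemma noncrossing_rel_empty: "noncrossing_rel (\<lambda>_ _. False)"
  by (simp add: noncrossing_rel_def)

lemma phi_rel_equiv_noncrossing: "equiv_upto (nodes t) (phi_rel t) \<and> noncrossing_rel (phi_rel t)"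
  by (induction t)
    (auto simp: equiv_upto_empty noncrossing_rel_empty noncrossing_rel_concat
      noncrossing_bar_ustar_rel
      intro!: equiv_upto_rel_concat[where l = "Suc _", simplified] equiv_upto_bar_ustar_rel)

lemma odd_even_rel_equiv_noncrossing:
  "equiv_upto (nodes t) (odd_rel t) \<and> noncrossing_rel (odd_rel t) \<and>
   equiv_upto (nodes t) (even_rel t) \<and> noncrossing_rel (even_rel t)"
  by (induction t)
    (auto simp: equiv_upto_empty noncrossing_rel_empty noncrossing_rel_concat
      noncrossing_bar_ustar_rel
      intro!: equiv_upto_rel_concat[where l = "Suc _", simplified]
        equiv_upto_rel_concat[where m = "Suc _", simplified] equiv_upto_bar_ustar_rel)

definition blocks :: "nrel \<Rightarrow> nat set set" where
  "blocks r = (\<lambda>i. {j. r i j}) ` {i. r i i}"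

definition same_block :: "nat set set \<Rightarrow> nrel" where
  "same_block P i j \<longleftrightarrow> (\<exists>B\<in>P. i \<in> B \<and> j \<in> B)"

lemma equiv_upto_class_eq_set: "equiv_upto n r \<Longrightarrow> r i k \<Longrightarrow> {j. r i j} = {j. r k j}"
  using equiv_upto_class_eq by blast

lemma is_partition_blocks:
  assumes r: "equiv_upto n r"
  shows "is_partition n (blocks r)"
  unfolding is_partition_def
proof (intro conjI ballI impI)
  show "B \<noteq> {}" if "B \<in> blocks r" for B
    using that unfolding blocks_def by auto
  show "B \<inter> C = {}" if "B \<in> blocks r" "C \<in> blocks r" "B \<noteq> C" for B C
    using that equiv_upto_class_eq_set[OF r] equiv_upto_sym[OF r] equiv_upto_trans[OF r]
    unfolding blocks_def by blast
  show "\<Union> (blocks r) = {1..n}"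
    using equiv_upto_dom[OF r] equiv_upto_refl[OF r] unfolding blocks_def by fastforce
qed

lemma noncrossing_blocks_iff:
  assumes r: "equiv_upto n r"
  shows "noncrossing (blocks r) \<longleftrightarrow> noncrossing_rel r"
proof
  assume nc: "noncrossing (blocks r)"
  show "noncrossing_rel r" unfolding noncrossing_rel_def
  proof (intro allI impI)
    fix a b c d :: nat
    assume abcd: "a < b" "b < c" "c < d" "r a c" "r b d"
    show "r a b"
    proof (rule ccontr)
      assume "\<not> r a b"
      have "r a a" "r b b" using abcd equiv_upto_sym[OF r] equiv_upto_trans[OF r] by blast+
      then have "{j. r a j} \<in> blocks r" "{j. r b j} \<in> blocks r" "{j. r a j} \<noteq> {j. r b j}"
        using \<open>\<not> r a b\<close> unfolding blocks_def by auto
      moreover have "a \<in> {j. r a j}" "c \<in> {j. r a j}" "b \<in> {j. r b j}" "d \<in> {j. r b j}"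
        using abcd \<open>r a a\<close> \<open>r b b\<close> by auto
      ultimately have "\<exists>B\<in>blocks r. \<exists>C\<in>blocks r. B \<noteq> C \<and>
          (\<exists>a b c d. a < b \<and> b < c \<and> c < d \<and> a \<in> B \<and> c \<in> B \<and> b \<in> C \<and> d \<in> C)"
        using abcd(1-3) by meson
      with nc show False unfolding noncrossing_def by blast
    qed
  qed
next
  assume nc: "noncrossing_rel r"
  show "noncrossing (blocks r)" unfolding noncrossing_def
  proof
    assume "\<exists>B\<in>blocks r. \<exists>C\<in>blocks r. B \<noteq> C \<and>
      (\<exists>a b c d. a < b \<and> b < c \<and> c < d \<and> a \<in> B \<and> c \<in> B \<and> b \<in> C \<and> d \<in> C)"
    then obtain i k a b c d where ik: "{j. r i j} \<noteq> {j. r k j}"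
      and abcd: "a < b" "b < c" "c < d" "r i a" "r i c" "r k b" "r k d"
      unfolding blocks_def by blast
    have "r a c" "r b d"
      using abcd equiv_upto_sym[OF r] equiv_upto_trans[OF r] by blast+
    then have "r a b" using noncrossing_relD[OF nc abcd(1-3)] by blast
    then have "r i k" using abcd equiv_upto_sym[OF r] equiv_upto_trans[OF r] by blast
    then show False using ik equiv_upto_class_eq_set[OF r] by blast
  qed
qed

lemma blocks_in_NCP: "equiv_upto n r \<Longrightarrow> noncrossing_rel r \<Longrightarrow> blocks r \<in> NCP n"
  unfolding NCP_def using is_partition_blocks noncrossing_blocks_iff by blast

lemma is_partition_same_block:
  assumes "is_partition n P"
  shows "equiv_upto n (same_block P)" "blocks (same_block P) = P"
proof -
  have nonempty: "\<And>B. B \<in> P \<Longrightarrow> B \<noteq> {}"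
    and disjoint: "\<And>B C. B \<in> P \<Longrightarrow> C \<in> P \<Longrightarrow> B \<noteq> C \<Longrightarrow> B \<inter> C = {}"
    and cover: "\<Union>P = {1..n}"
    using assms unfolding is_partition_def by blast+
  show "equiv_upto n (same_block P)"
  proof (rule equiv_uptoI)
    show "1 \<le> i \<and> i \<le> n \<and> 1 \<le> j \<and> j \<le> n" if "same_block P i j" for i j
      using that cover unfolding same_block_def by auto
    show "same_block P i i" if "1 \<le> i" "i \<le> n" for i
      using that cover unfolding same_block_def by auto
    show "same_block P j i" if "same_block P i j" for i j
      using that unfolding same_block_def by auto
    show "same_block P i k" if "same_block P i j" "same_block P j k" for i j k
      using that disjoint unfolding same_block_def by blast
  qed
  have block: "B = {j. same_block P i j}" if "B \<in> P" "i \<in> B" for B i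
    using that disjoint unfolding same_block_def by blast
  show "blocks (same_block P) = P"
  proof
    show "blocks (same_block P) \<subseteq> P"
      using block unfolding blocks_def same_block_def by auto
    show "P \<subseteq> blocks (same_block P)"
    proof
      fix B assume "B \<in> P"
      with nonempty obtain i where "i \<in> B" by blast
      with \<open>B \<in> P\<close> show "B \<in> blocks (same_block P)"
        using block unfolding blocks_def same_block_def by blast
    qed
  qed
qed

lemma NCP_same_block:
  assumes "P \<in> NCP n"
  shows "equiv_upto n (same_block P)" "noncrossing_rel (same_block P)" "blocks (same_block P) = P"
proof -
  have "is_partition n P" "noncrossing P" using assms unfolding NCP_def by auto
  then show "equiv_upto n (same_block P)" "blocks (same_block P) = P"
    "noncrossing_rel (same_block P)"
    using is_partition_same_block noncrossing_blocks_iff by metis+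
qed

lemma refines_blocks_iff:
  assumes r: "equiv_upto n r" and s: "equiv_upto n s"
  shows "refines (blocks r) (blocks s) \<longleftrightarrow> (\<forall>i j. r i j \<longrightarrow> s i j)"
proof
  assume refines: "refines (blocks r) (blocks s)"
  show "\<forall>i j. r i j \<longrightarrow> s i j"
  proof (intro allI impI)
    fix i j assume "r i j"
    then have "r i i" using equiv_upto_sym[OF r] equiv_upto_trans[OF r] by blast
    then obtain k where "{j. r i j} \<subseteq> {j. s k j}"
      using refines unfolding refines_def blocks_def by blast
    with \<open>r i i\<close> \<open>r i j\<close> have "s k i" "s k j" by auto
    then show "s i j" using equiv_upto_sym[OF s] equiv_upto_trans[OF s] by blast
  qed
next
  assume "\<forall>i j. r i j \<longrightarrow> s i j"
  then show "refines (blocks r) (blocks s)"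
    unfolding refines_def blocks_def by blast
qed

lemma class_rel_concat_left:
  assumes "equiv_upto m r1" "i \<le> m"
  shows "{j. rel_concat m r1 r2 i j} = {j. r1 i j}"
  using assms equiv_upto_dom(4)[OF assms(1)] by (auto simp: rel_concat_def)

lemma class_rel_concat_right:
  assumes "equiv_upto l r2" "1 \<le> i"
  shows "{j. rel_concat m r1 r2 (i + m) j} = (\<lambda>x. x + m) ` {j. r2 i j}"
proof -
  have "rel_concat m r1 r2 (i + m) j \<longleftrightarrow> (\<exists>x. r2 i x \<and> j = x + m)" for j
    using assms(2) unfolding rel_concat_def
    by (auto intro: exI[of _ "j - m"] dest: equiv_upto_dom(3)[OF assms(1)])
  then show ?thesis by auto
qed

lemma blocks_rel_concat:
  assumes r1: "equiv_upto m r1" and r2: "equiv_upto l r2"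
  shows "concat m (blocks r1) (blocks r2) = blocks (rel_concat m r1 r2)"
proof
  show "concat m (blocks r1) (blocks r2) \<subseteq> blocks (rel_concat m r1 r2)"
  proof
    fix B assume "B \<in> concat m (blocks r1) (blocks r2)"
    then consider i where "r1 i i" "B = {j. r1 i j}"
      | i where "r2 i i" "B = (\<lambda>x. x + m) ` {j. r2 i j}"
      unfolding concat_def shift_def blocks_def by blast
    then show "B \<in> blocks (rel_concat m r1 r2)"
    proof cases
      case (1 i)
      then have "B = {j. rel_concat m r1 r2 i j}" "rel_concat m r1 r2 i i"
        using class_rel_concat_left[OF r1] equiv_upto_dom(2)[OF r1 1(1)]
          by (auto simp: rel_concat_def)
      then show ?thesis unfolding blocks_def by blast
    next
      case (2 i)
      then have "B = {j. rel_concat m r1 r2 (i + m) j}" "rel_concat m r1 r2 (i + m) (i + m)"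
        using class_rel_concat_right[OF r2] equiv_upto_dom(1)[OF r2 2(1)]
          by (auto simp: rel_concat_def)
      then show ?thesis unfolding blocks_def by blast
    qed
  qed
  show "blocks (rel_concat m r1 r2) \<subseteq> concat m (blocks r1) (blocks r2)"
  proof
    fix B assume "B \<in> blocks (rel_concat m r1 r2)"
    then obtain i where i: "rel_concat m r1 r2 i i" "B = {j. rel_concat m r1 r2 i j}"
      unfolding blocks_def by blast
    show "B \<in> concat m (blocks r1) (blocks r2)"
    proof (cases "i \<le> m")
      case True
      then have "B = {j. r1 i j}" "r1 i i"
        using i class_rel_concat_left[OF r1] by (auto simp: rel_concat_def)
      then show ?thesis unfolding concat_def blocks_def by blast
    next
      case False
      then have "i = (i - m) + m" "1 \<le> i - m" by auto
      then have "B = (\<lambda>x. x + m) ` {j. r2 (i - m) j}" "r2 (i - m) (i - m)"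
        using i class_rel_concat_right[OF r2, of "i - m" m r1] False
          by (metis, simp add: rel_concat_def)
      then show ?thesis unfolding concat_def shift_def blocks_def by blast
    qed
  qed
qed

lemma blk_blocks:
  assumes r: "equiv_upto n r" and "r x x"
  shows "blk (blocks r) x = {j. r x j}"
  unfolding blk_def
proof (rule the_equality)
  show "{j. r x j} \<in> blocks r \<and> x \<in> {j. r x j}"
    using \<open>r x x\<close> unfolding blocks_def by auto
  show "B = {j. r x j}" if "B \<in> blocks r \<and> x \<in> B" for B
  proof -
    from that obtain i where "B = {j. r i j}" "r i x" unfolding blocks_def by auto
    then show ?thesis using equiv_upto_class_eq_set[OF r] by blast
  qed
qed

definition rel_merge :: "nrel \<Rightarrow> nat \<Rightarrow> nat \<Rightarrow> nrel" where
  "rel_merge r x y i j \<longleftrightarrow> r i j \<or> (r i x \<and> r y j) \<or> (r i y \<and> r x j)"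

lemma blocks_rel_merge:
  assumes r: "equiv_upto n r" and "r x x" "r y y"
  shows "(blocks r - {{j. r x j}, {j. r y j}}) \<union> {{j. r x j} \<union> {j. r y j}} =
    blocks (rel_merge r x y)"
    (is "?lhs = _")
proof
  show "?lhs \<subseteq> blocks (rel_merge r x y)"
  proof
    fix B assume B: "B \<in> ?lhs"
    show "B \<in> blocks (rel_merge r x y)"
    proof (cases "B = {j. r x j} \<union> {j. r y j}")
      case True
      then have "B = {j. rel_merge r x y x j}" "rel_merge r x y x x"
        using \<open>r x x\<close> by (auto simp: rel_merge_def)
      then show ?thesis unfolding blocks_def by blast
    next
      case False
      with B obtain i where i: "r i i" "B = {j. r i j}" "B \<noteq> {j. r x j}" "B \<noteq> {j. r y j}"
        unfolding blocks_def by auto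
      then have "\<not> r i x" "\<not> r i y" using equiv_upto_class_eq_set[OF r] by blast+
      with i have "B = {j. rel_merge r x y i j}" "rel_merge r x y i i"
        by (auto simp: rel_merge_def)
      then show ?thesis unfolding blocks_def by blast
    qed
  qed
  show "blocks (rel_merge r x y) \<subseteq> ?lhs"
  proof
    fix B assume "B \<in> blocks (rel_merge r x y)"
    then obtain i where i: "rel_merge r x y i i" "B = {j. rel_merge r x y i j}"
      unfolding blocks_def by blast
    consider "r i x" | "r i y" | "\<not> r i x" "\<not> r i y" by blast
    then show "B \<in> ?lhs"
    proof cases
      case 1
      have "r i j \<longleftrightarrow> r x j" for j using equiv_upto_class_eq[OF r 1] .
      then have "rel_merge r x y i j \<longleftrightarrow> r x j \<or> r y j" for j
        using \<open>r x x\<close> unfolding rel_merge_def by blast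
      then have "B = {j. r x j} \<union> {j. r y j}" using i(2) by auto
      then show ?thesis by simp
    next
      case 2
      have "r i j \<longleftrightarrow> r y j" for j using equiv_upto_class_eq[OF r 2] .
      then have "rel_merge r x y i j \<longleftrightarrow> r x j \<or> r y j" for j
        using \<open>r y y\<close> unfolding rel_merge_def by blast
      then have "B = {j. r x j} \<union> {j. r y j}" using i(2) by auto
      then show ?thesis by simp
    next
      case 3
      then have "r i i" "B = {j. r i j}" using i unfolding rel_merge_def by auto
      moreover have "x \<notin> B" "y \<notin> B" using 3 \<open>B = {j. r i j}\<close> by auto
      ultimately show ?thesis using \<open>r x x\<close> \<open>r y y\<close> unfolding blocks_def by blast
    qed
  qed
qed

lemma bar_eq_blocks: "bar = blocks (\<lambda>i j. i = 1 \<and> j = 1)"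
  by (auto simp: bar_def blocks_def)

lemma equiv_upto_singleton: "equiv_upto 1 (\<lambda>i j. i = 1 \<and> j = 1)"
  by (rule equiv_uptoI) auto

lemma blocks_bar_ustar_rel:
  assumes r: "equiv_upto l r"
  shows "ustar 1 bar l (blocks r) = blocks (bar_ustar_rel l r)"
proof (cases "l = 0")
  case True
  then have "r = (\<lambda>_ _. False)" using r equiv_upto_0_iff by simp
  moreover have "bar_ustar_rel 0 (\<lambda>_ _. False) = (\<lambda>i j. i = 1 \<and> j = 1)"
    by (auto simp: bar_ustar_rel_def fun_eq_iff)
  ultimately show ?thesis by (simp add: True ustar_def bar_eq_blocks blocks_def)
next
  case False
  define c where "c = rel_concat 1 (\<lambda>i j. i = 1 \<and> j = 1) r"
  have c: "equiv_upto (Suc l) c"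
    unfolding c_def using equiv_upto_rel_concat[OF equiv_upto_singleton r] by simp
  have c_iff: "c i j \<longleftrightarrow> (i = 1 \<and> j = 1) \<or> (2 \<le> i \<and> 2 \<le> j \<and> r (i - 1) (j - 1))" for i j
    using equiv_upto_dom(1,3)[OF r, of 0] equiv_upto_dom(1,3)[OF r, of _ 0]
    unfolding c_def rel_concat_def by fastforce
  have "c 1 1" "c (Suc l) (Suc l)" using equiv_upto_refl[OF c] by simp_all
  have "r 1 1" using equiv_upto_refl[OF r] False by simp
  then have "blocks r \<noteq> {}" unfolding blocks_def by auto
  moreover have "concat 1 bar (blocks r) = blocks c"
    unfolding c_def bar_eq_blocks using blocks_rel_concat[OF equiv_upto_singleton r] .
  ultimately have "ustar 1 bar l (blocks r)
      = (blocks c - {{j. c 1 j}, {j. c (Suc l) j}}) \<union> {{j. c 1 j} \<union> {j. c (Suc l) j}}"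
    using blk_blocks[OF c \<open>c 1 1\<close>] blk_blocks[OF c \<open>c (Suc l) (Suc l)\<close>]
    by (simp add: ustar_def Let_def bar_def)
  also have "\<dots> = blocks (rel_merge c 1 (Suc l))"
    using blocks_rel_merge[OF c \<open>c 1 1\<close> \<open>c (Suc l) (Suc l)\<close>] .
  also have "rel_merge c 1 (Suc l) = bar_ustar_rel l r"
    using False equiv_upto_sym_iff[OF r]
    by (auto simp: fun_eq_iff rel_merge_def c_iff bar_ustar_rel_def)
  finally show ?thesis .
qed

lemma phi_eq_blocks_phi_rel: "phi t = blocks (phi_rel t)"
proof (induction t)
  case (Node s t)
  have s: "equiv_upto (nodes s) (phi_rel s)" and t: "equiv_upto (nodes t) (phi_rel t)"
    using phi_rel_equiv_noncrossing by auto
  show ?case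
    using Node blocks_bar_ustar_rel[OF t] blocks_rel_concat[OF s equiv_upto_bar_ustar_rel[OF t]]
      by simp
qed (simp add: blocks_def)

definition rel_interleave :: "nrel \<Rightarrow> nrel \<Rightarrow> nrel" where
  "rel_interleave r1 r2 i j \<longleftrightarrow>
     (odd i \<and> odd j \<and> r1 ((i + 1) div 2) ((j + 1) div 2)) \<or>
     (even i \<and> even j \<and> r2 (i div 2) (j div 2))"

lemma rel_interleave_odd_odd [simp]:
    "rel_interleave r1 r2 (Suc (2 * x)) (Suc (2 * y)) = r1 (Suc x) (Suc y)"
  and rel_interleave_even_even [simp]: "rel_interleave r1 r2 (2 * x) (2 * y) = r2 x y"
  and rel_interleave_odd_even [simp]: "\<not> rel_interleave r1 r2 (Suc (2 * x)) (2 * y)"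
  and rel_interleave_even_odd [simp]: "\<not> rel_interleave r1 r2 (2 * x) (Suc (2 * y))"
  by (simp_all add: rel_interleave_def)

lemma nat_parity_cases: obtains x where "i = 2 * x" | x where "i = Suc (2 * x)"
  by (metis evenE oddE plus_1_eq_Suc add.commute)

lemma nat_parity_Suc_cases: obtains "i = 0" | x where "i = 2 * Suc x" | x where "i = Suc (2 * x)"
  by (metis evenE oddE nat.exhaust mult_0_right plus_1_eq_Suc add.commute)

lemma bar_ustar_rel_interleave:
  assumes p: "equiv_upto n p" and q: "equiv_upto n q"
  shows "bar_ustar_rel (2 * n) (rel_interleave p q) = rel_interleave (bar_ustar_rel n q) p"
proof (intro ext)
  have p0: "\<not> p 0 j" "\<not> p j 0" for j using equiv_upto_dom(1,3)[OF p] by fastforce+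
  fix i j
  show "bar_ustar_rel (2 * n) (rel_interleave p q) i j = rel_interleave (bar_ustar_rel n q) p i j"
    by (cases i rule: nat_parity_Suc_cases; cases j rule: nat_parity_Suc_cases)
      (auto simp: bar_ustar_rel_def rel_interleave_def p0)
qed

lemma rel_interleave_concat:
  "rel_interleave (rel_concat (Suc a) p1 p2) (rel_concat a q1 q2) =
   rel_concat (Suc (2 * a)) (rel_interleave p1 q1) (rel_interleave q2 p2)"
proof (intro ext)
  fix i j
  show "rel_interleave (rel_concat (Suc a) p1 p2) (rel_concat a q1 q2) i j =
      rel_concat (Suc (2 * a)) (rel_interleave p1 q1) (rel_interleave q2 p2) i j"
  proof (cases i rule: nat_parity_cases; cases j rule: nat_parity_cases)
    fix x y assume "i = 2 * x" "j = 2 * y"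
    moreover have "2 * x - Suc (2 * a) = Suc (2 * (x - Suc a))" if "a < x" for x
      using that by arith
    ultimately show ?thesis by (auto simp: rel_concat_def rel_interleave_def Suc_diff_Suc)
  next
    fix x y assume "i = Suc (2 * x)" "j = Suc (2 * y)"
    moreover have "Suc (2 * x) - Suc (2 * a) = 2 * (x - a)" for x
      by arith
    ultimately show ?thesis by (auto simp: rel_concat_def rel_interleave_def)
  qed (auto simp: rel_concat_def rel_interleave_def)
qed

lemma nodes_R: "nodes (R t) = 2 * nodes t"
  by (induction t) auto

lemma phi_rel_R: "phi_rel (R t) = rel_interleave (odd_rel t) (even_rel t)"
proof (induction t)
  case Leaf
  show ?case by (simp add: rel_interleave_def fun_eq_iff)
next
  case (Node s t)
  have s: "equiv_upto (nodes s) (odd_rel s)" "equiv_upto (nodes s) (even_rel s)"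
    and t: "equiv_upto (nodes t) (odd_rel t)" "equiv_upto (nodes t) (even_rel t)"
    using odd_even_rel_equiv_noncrossing by auto
  have "rel_concat 0 (\<lambda>_ _. False) (bar_ustar_rel l r) = bar_ustar_rel l r" for l r
    by (auto simp: fun_eq_iff rel_concat_def bar_ustar_rel_def)
  then have "phi_rel (R (Node s t)) = rel_concat (Suc (2 * nodes s))
      (bar_ustar_rel (2 * nodes s) (rel_interleave (odd_rel s) (even_rel s)))
      (bar_ustar_rel (2 * nodes t) (rel_interleave (odd_rel t) (even_rel t)))"
    using Node by (simp add: nodes_R)
  also have "\<dots> = rel_concat (Suc (2 * nodes s))
      (rel_interleave (bar_ustar_rel (nodes s) (even_rel s)) (odd_rel s))
      (rel_interleave (bar_ustar_rel (nodes t) (even_rel t)) (odd_rel t))"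
    by (simp add: bar_ustar_rel_interleave s t)
  also have "\<dots> = rel_interleave (odd_rel (Node s t)) (even_rel (Node s t))"
    by (simp add: rel_interleave_concat)
  finally show ?case .
qed

lemma equiv_upto_rel_interleave:
  assumes r1: "equiv_upto n r1" and r2: "equiv_upto n r2"
  shows "equiv_upto (2 * n) (rel_interleave r1 r2)"
proof (rule equiv_uptoI)
  show "rel_interleave r1 r2 i i" if "1 \<le> i" "i \<le> 2 * n" for i
    using that equiv_upto_refl[OF r1] equiv_upto_refl[OF r2]
    by (cases i rule: nat_parity_cases) auto
  show "1 \<le> i \<and> i \<le> 2 * n \<and> 1 \<le> j \<and> j \<le> 2 * n" if "rel_interleave r1 r2 i j" for i j
    using that equiv_upto_dom[OF r1] equiv_upto_dom[OF r2]
    by (cases i rule: nat_parity_cases; cases j rule: nat_parity_cases) fastforce+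
  show "rel_interleave r1 r2 j i" if "rel_interleave r1 r2 i j" for i j
    using that equiv_upto_sym[OF r1] equiv_upto_sym[OF r2] unfolding rel_interleave_def by blast
  show "rel_interleave r1 r2 i k" if "rel_interleave r1 r2 i j" "rel_interleave r1 r2 j k" for i j k
    using that equiv_upto_trans[OF r1] equiv_upto_trans[OF r2] unfolding rel_interleave_def by blast
qed

lemma class_rel_interleave_odd:
  assumes r1: "equiv_upto n r1"
  shows "{j. rel_interleave r1 r2 (Suc (2 * x)) j} = (\<lambda>i. 2 * i - 1) ` {j. r1 (Suc x) j}"
proof -
  have "rel_interleave r1 r2 (Suc (2 * x)) j \<longleftrightarrow> (\<exists>y. r1 (Suc x) y \<and> j = 2 * y - 1)" for j
  proof
    assume j: "rel_interleave r1 r2 (Suc (2 * x)) j"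
    then obtain y where "j = Suc (2 * y)" by (cases j rule: nat_parity_cases) auto
    with j show "\<exists>y. r1 (Suc x) y \<and> j = 2 * y - 1" by (intro exI[of _ "Suc y"]) simp
  next
    assume "\<exists>y. r1 (Suc x) y \<and> j = 2 * y - 1"
    then obtain y where y: "r1 (Suc x) y" "j = 2 * y - 1" by blast
    moreover obtain y' where "y = Suc y'" using equiv_upto_dom(3)[OF r1 y(1)] by (cases y) auto
    ultimately show "rel_interleave r1 r2 (Suc (2 * x)) j" by simp
  qed
  then show ?thesis by auto
qed

lemma class_rel_interleave_even:
  "{j. rel_interleave r1 r2 (2 * x) j} = (\<lambda>i. 2 * i) ` {j. r2 x j}"
proof -
  have "rel_interleave r1 r2 (2 * x) j \<longleftrightarrow> (\<exists>y. r2 x y \<and> j = 2 * y)" for j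
    by (cases j rule: nat_parity_cases) (auto, presburger)
  then show ?thesis by auto
qed

lemma interleave_blocks:
  assumes r1: "equiv_upto n r1" and r2: "equiv_upto n r2"
  shows "interleave (blocks r1) (blocks r2) = blocks (rel_interleave r1 r2)"
proof
  show "interleave (blocks r1) (blocks r2) \<subseteq> blocks (rel_interleave r1 r2)"
  proof
    fix B assume "B \<in> interleave (blocks r1) (blocks r2)"
    then consider i where "r1 i i" "B = (\<lambda>i. 2 * i - 1) ` {j. r1 i j}"
      | i where "r2 i i" "B = (\<lambda>i. 2 * i) ` {j. r2 i j}"
      unfolding interleave_def blocks_def by blast
    then show "B \<in> blocks (rel_interleave r1 r2)"
    proof cases
      case (1 i)
      then obtain x where "i = Suc x" using equiv_upto_dom(1)[OF r1] by (cases i) auto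
      with 1 have "B = {j. rel_interleave r1 r2 (Suc (2 * x)) j}"
          "rel_interleave r1 r2 (Suc (2 * x)) (Suc (2 * x))"
        using class_rel_interleave_odd[OF r1] by simp_all
      then show ?thesis unfolding blocks_def by blast
    next
      case (2 i)
      then have "B = {j. rel_interleave r1 r2 (2 * i) j}" "rel_interleave r1 r2 (2 * i) (2 * i)"
        using class_rel_interleave_even by simp_all
      then show ?thesis unfolding blocks_def by blast
    qed
  qed
  show "blocks (rel_interleave r1 r2) \<subseteq> interleave (blocks r1) (blocks r2)"
  proof
    fix B assume "B \<in> blocks (rel_interleave r1 r2)"
    then obtain i where i: "rel_interleave r1 r2 i i" "B = {j. rel_interleave r1 r2 i j}"
      unfolding blocks_def by blast
    show "B \<in> interleave (blocks r1) (blocks r2)"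
    proof (cases i rule: nat_parity_cases)
      case (1 x)
      with i have "B = (\<lambda>i. 2 * i) ` {j. r2 x j}" "r2 x x"
        using class_rel_interleave_even by simp_all
      then show ?thesis unfolding interleave_def blocks_def by blast
    next
      case (2 x)
      with i have "B = (\<lambda>i. 2 * i - 1) ` {j. r1 (Suc x) j}" "r1 (Suc x) (Suc x)"
        using class_rel_interleave_odd[OF r1] by simp_all
      then show ?thesis unfolding interleave_def blocks_def by blast
    qed
  qed
qed

section \<open>The Kreweras complement of blocks (odd_rel t)\<close>

definition saturated :: "nrel \<Rightarrow> nat \<Rightarrow> nat \<Rightarrow> bool" where
  "saturated r u v \<longleftrightarrow> (\<forall>x y. r x y \<longrightarrow> u \<le> x \<longrightarrow> x \<le> v \<longrightarrow> u \<le> y \<and> y \<le> v)"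

lemma saturatedI:
  "(\<And>x y. r x y \<Longrightarrow> u \<le> x \<Longrightarrow> x \<le> v \<Longrightarrow> u \<le> y \<and> y \<le> v) \<Longrightarrow> saturated r u v"
  unfolding saturated_def by blast

lemma saturatedD: "saturated r u v \<Longrightarrow> r x y \<Longrightarrow> u \<le> x \<Longrightarrow> x \<le> v \<Longrightarrow> u \<le> y \<and> y \<le> v"
  unfolding saturated_def by blast

lemma saturated_complement:
  assumes r: "equiv_upto m r" and sat: "saturated r 1 v"
  shows "saturated r (Suc v) m"
proof (rule saturatedI)
  fix x y assume "r x y" "Suc v \<le> x" "x \<le> m"
  moreover have "\<not> y \<le> v" using saturatedD[OF sat equiv_upto_sym[OF r \<open>r x y\<close>]]
    equiv_upto_dom(3)[OF r \<open>r x y\<close>] \<open>Suc v \<le> x\<close> by auto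
  ultimately show "Suc v \<le> y \<and> y \<le> m" using equiv_upto_dom(4)[OF r] by fastforce
qed

lemma saturated_rel_concat_left:
  assumes "equiv_upto m r1" "saturated (rel_concat m r1 r2) u v" "v \<le> m"
  shows "saturated r1 u v"
  using assms saturatedD[OF assms(2)] equiv_upto_dom(4)[OF assms(1)]
  by (intro saturatedI) (simp add: rel_concat_def)

lemma saturated_rel_concat_right:
  assumes "equiv_upto l r2" "saturated (rel_concat m r1 r2) u v" "m < u"
  shows "saturated r2 (u - m) (v - m)"
proof (rule saturatedI)
  fix x y assume "r2 x y" "u - m \<le> x" "x \<le> v - m"
  moreover have "1 \<le> y" using equiv_upto_dom(3)[OF assms(1) \<open>r2 x y\<close>] .
  ultimately have "rel_concat m r1 r2 (x + m) (y + m)" "u \<le> x + m" "x + m \<le> v"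
    using \<open>m < u\<close> by (auto simp: rel_concat_def)
  then show "u - m \<le> y \<and> y \<le> v - m" using saturatedD[OF assms(2)] by fastforce
qed

lemma saturated_bar_ustar_rel:
  assumes "equiv_upto l r" "saturated (bar_ustar_rel l r) u v" "2 \<le> u"
  shows "saturated r (u - 1) (v - 1)"
proof (rule saturatedI)
  fix x y assume "r x y" "u - 1 \<le> x" "x \<le> v - 1"
  moreover have "1 \<le> y" using equiv_upto_dom(3)[OF assms(1) \<open>r x y\<close>] .
  ultimately have "bar_ustar_rel l r (Suc x) (Suc y)" "u \<le> Suc x" "Suc x \<le> v"
    using \<open>2 \<le> u\<close> by (auto simp: bar_ustar_rel_def)
  then show "u - 1 \<le> y \<and> y \<le> v - 1" using saturatedD[OF assms(2)] by fastforce
qed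

lemma saturated_if_noncrossing_interleave:
  assumes p: "equiv_upto n p" and nc: "noncrossing_rel (rel_interleave p q)"
    and ij: "q i j" "i \<le> j"
  shows "saturated p (Suc i) j"
proof (rule saturatedI)
  fix x y assume xy: "p x y" "Suc i \<le> x" "x \<le> j"
  obtain x' y' where x': "x = Suc x'" and y': "y = Suc y'"
    using equiv_upto_dom(1,3)[OF p xy(1)] by (cases x; cases y) auto
  have ij': "rel_interleave p q (2 * i) (2 * j)" using ij by simp
  show "Suc i \<le> y \<and> y \<le> j"
  proof (rule ccontr)
    assume "\<not> (Suc i \<le> y \<and> y \<le> j)"
    then consider "y \<le> i" | "j < y" by linarith
    then show False
    proof cases
      case 1
      have "rel_interleave p q (Suc (2 * y')) (Suc (2 * x'))"
        using equiv_upto_sym[OF p xy(1)] x' y' by simp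
      moreover have "Suc (2 * y') < 2 * i" "2 * i < Suc (2 * x')" "Suc (2 * x') < 2 * j"
        using 1 xy(2,3) x' y' by auto
      ultimately have "rel_interleave p q (Suc (2 * y')) (2 * i)"
        using noncrossing_relD[OF nc _ _ _ _ ij'] by blast
      then show False by simp
    next
      case 2
      have "rel_interleave p q (Suc (2 * x')) (Suc (2 * y'))" using xy(1) x' y' by simp
      moreover have "2 * i < Suc (2 * x')" "Suc (2 * x') < 2 * j" "2 * j < Suc (2 * y')"
        using 2 xy(2,3) x' y' by auto
      ultimately have "rel_interleave p q (2 * i) (Suc (2 * x'))"
        using noncrossing_relD[OF nc _ _ _ ij'] by blast
      then show False by simp
    qed
  qed
qed

lemma odd_rel_Node_root: "odd_rel (Node s t) (Suc (nodes s)) 1"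
  using odd_even_rel_equiv_noncrossing[of s] equiv_upto_refl[of "nodes s" "even_rel s" "nodes s"]
  by (cases "nodes s = 0") (simp_all add: rel_concat_def bar_ustar_rel_def)

lemma even_rel_Node_root:
  "0 < nodes t \<Longrightarrow> even_rel (Node s t) (Suc (nodes s)) (Suc (nodes s + nodes t))"
  using odd_even_rel_equiv_noncrossing[of t] equiv_upto_refl[of "nodes t" "even_rel t" "nodes t"]
  by (simp add: rel_concat_def bar_ustar_rel_def)

lemma odd_rel_Node_if_saturated:
  assumes IH_s: "\<And>j k. 1 \<le> j \<Longrightarrow> j \<le> k \<Longrightarrow> k \<le> nodes s \<Longrightarrow>
      saturated (odd_rel s) (Suc j) k \<Longrightarrow> even_rel s j k"
    and IH_t: "\<And>j k. 1 \<le> j \<Longrightarrow> j \<le> k \<Longrightarrow> k \<le> nodes t \<Longrightarrow>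
      saturated (even_rel t) j (k - 1) \<Longrightarrow> odd_rel t j k"
    and jk: "1 \<le> j" "j \<le> k" "k \<le> nodes (Node s t)"
    and sat: "saturated (even_rel (Node s t)) j (k - 1)"
  shows "odd_rel (Node s t) j k"
proof -
  define a b where "a = nodes s" and "b = nodes t"
  have s: "equiv_upto a (odd_rel s)" "equiv_upto a (even_rel s)"
    and t: "equiv_upto b (odd_rel t)" "equiv_upto b (even_rel t)"
    using odd_even_rel_equiv_noncrossing a_def b_def by auto
  have odd: "odd_rel (Node s t) = rel_concat (Suc a) (bar_ustar_rel a (even_rel s)) (odd_rel t)"
    and even: "even_rel (Node s t) = rel_concat a (odd_rel s) (bar_ustar_rel b (even_rel t))"
    by (simp_all add: a_def b_def)
  consider "k \<le> Suc a" | "Suc a < j" | "j \<le> Suc a" "Suc a < k" by linarith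
  then show ?thesis
  proof cases
    case 1
    have sat_s: "saturated (odd_rel s) j (k - 1)"
      using saturated_rel_concat_left[OF s(1)] sat 1 unfolding even by simp
    consider "j = 1" "k = 1" | "j = 1" "2 \<le> k" | "2 \<le> j" using jk by linarith
    then have "bar_ustar_rel a (even_rel s) j k"
    proof cases
      case 2
      then have "saturated (odd_rel s) (Suc (k - 1)) a"
        using saturated_complement[OF s(1), of "k - 1"] sat_s by simp
      then show ?thesis using IH_s[of "k - 1" a] 1 2 by (simp add: a_def bar_ustar_rel_def)
    next
      case 3
      then show ?thesis using IH_s[of "j - 1" "k - 1"] sat_s 1 jk
        by (simp add: a_def bar_ustar_rel_def)
    qed (simp add: bar_ustar_rel_def)
    then show ?thesis using 1 jk unfolding odd by (simp add: rel_concat_def)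
  next
    case 2
    have "saturated (bar_ustar_rel b (even_rel t)) (j - a) (k - 1 - a)"
      using saturated_rel_concat_right[OF equiv_upto_bar_ustar_rel[OF t(2)], of a _ j "k - 1"] sat 2
      unfolding even by simp
    then have "saturated (even_rel t) (j - Suc a) (k - Suc a - 1)"
      using saturated_bar_ustar_rel[OF t(2)] 2 by fastforce
    then show ?thesis
      using IH_t[of "j - Suc a" "k - Suc a"] 2 jk unfolding odd
        by (simp add: a_def b_def rel_concat_def)
  next
    case 3
    then have "0 < nodes t" using jk by (simp add: a_def)
    then show ?thesis using saturatedD[OF sat even_rel_Node_root] 3 jk by (fastforce simp: a_def)
  qed
qed

lemma even_rel_Node_if_saturated:
  assumes IH_s: "\<And>j k. 1 \<le> j \<Longrightarrow> j \<le> k \<Longrightarrow> k \<le> nodes s \<Longrightarrow>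
      saturated (even_rel s) j (k - 1) \<Longrightarrow> odd_rel s j k"
    and IH_t: "\<And>j k. 1 \<le> j \<Longrightarrow> j \<le> k \<Longrightarrow> k \<le> nodes t \<Longrightarrow>
      saturated (odd_rel t) (Suc j) k \<Longrightarrow> even_rel t j k"
    and jk: "1 \<le> j" "j \<le> k" "k \<le> nodes (Node s t)"
    and sat: "saturated (odd_rel (Node s t)) (Suc j) k"
  shows "even_rel (Node s t) j k"
proof -
  define a b where "a = nodes s" and "b = nodes t"
  have s: "equiv_upto a (odd_rel s)" "equiv_upto a (even_rel s)"
    and t: "equiv_upto b (odd_rel t)" "equiv_upto b (even_rel t)"
    using odd_even_rel_equiv_noncrossing a_def b_def by auto
  have odd: "odd_rel (Node s t) = rel_concat (Suc a) (bar_ustar_rel a (even_rel s)) (odd_rel t)"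
    and even: "even_rel (Node s t) = rel_concat a (odd_rel s) (bar_ustar_rel b (even_rel t))"
    by (simp_all add: a_def b_def)
  consider "k \<le> a" | "a < j" | "j \<le> a" "a < k" by linarith
  then show ?thesis
  proof cases
    case 1
    have "saturated (bar_ustar_rel a (even_rel s)) (Suc j) k"
      using saturated_rel_concat_left[OF equiv_upto_bar_ustar_rel[OF s(2)]] sat 1 unfolding odd
        by simp
    then have "saturated (even_rel s) j (k - 1)"
      using saturated_bar_ustar_rel[OF s(2)] jk by fastforce
    then show ?thesis using IH_s[of j k] 1 jk unfolding even by (simp add: a_def rel_concat_def)
  next
    case 2
    have sat_t: "saturated (odd_rel t) (Suc j - Suc a) (k - Suc a)"
      using saturated_rel_concat_right[OF t(1), of "Suc a" _ "Suc j" k] sat 2 unfolding odd by simp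
    consider "j = Suc a" "k = Suc a" | "j = Suc a" "Suc a < k" | "Suc a < j" using 2 jk by linarith
    then have "bar_ustar_rel b (even_rel t) (j - a) (k - a)"
    proof cases
      case 2
      then have "saturated (odd_rel t) (Suc (k - Suc a)) b"
        using saturated_complement[OF t(1)] sat_t by simp
      then show ?thesis using IH_t[of "k - Suc a" b] 2 jk
        by (auto simp: a_def b_def bar_ustar_rel_def)
    next
      case 3
      then have "saturated (odd_rel t) (Suc (j - Suc a)) (k - Suc a)"
        using sat_t by (simp add: Suc_diff_Suc)
      then have "even_rel t (j - Suc a) (k - Suc a)"
        using IH_t[of "j - Suc a" "k - Suc a"] 3 jk by (simp add: a_def b_def)
      then show ?thesis using 3 jk by (auto simp: bar_ustar_rel_def)
    qed (simp add: bar_ustar_rel_def)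
    then show ?thesis using 2 jk unfolding even by (simp add: rel_concat_def)
  next
    case 3
    then show ?thesis using saturatedD[OF sat odd_rel_Node_root] jk by (simp add: a_def)
  qed
qed

text \<open>The converse of saturated_if_noncrossing_interleave for Q = even_rel t; this is where
  the maximality of the Kreweras complement comes from.\<close>

lemma odd_even_rel_if_saturated:
  "(\<forall>j k. 1 \<le> j \<longrightarrow> j \<le> k \<longrightarrow> k \<le> nodes t \<longrightarrow> saturated (even_rel t) j (k - 1) \<longrightarrow> odd_rel t j k) \<and>
   (\<forall>j k. 1 \<le> j \<longrightarrow> j \<le> k \<longrightarrow> k \<le> nodes t \<longrightarrow> saturated (odd_rel t) (Suc j) k \<longrightarrow> even_rel t j k)"
proof (induction t)
  case (Node s t)
  then show ?case
    using odd_rel_Node_if_saturated[of s t] even_rel_Node_if_saturated[of s t] by simp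
qed simp

lemma refines_antisym:
  assumes "is_partition n P" "is_partition n Q" "refines P Q" "refines Q P"
  shows "P = Q"
proof -
  have P: "equiv_upto n (same_block P)" "blocks (same_block P) = P"
    and Q: "equiv_upto n (same_block Q)" "blocks (same_block Q) = Q"
    using is_partition_same_block assms(1,2) by blast+
  have "same_block P = same_block Q"
    using assms(3,4) refines_blocks_iff[OF P(1) Q(1)] refines_blocks_iff[OF Q(1) P(1)]
    unfolding P(2) Q(2) by (simp add: fun_eq_iff) blast
  then show ?thesis using P(2) Q(2) by metis
qed

lemma kreweras_eqI:
  assumes "Q \<in> NCP n" "noncrossing (interleave P Q)"
    and "\<And>Q'. Q' \<in> NCP n \<Longrightarrow> noncrossing (interleave P Q') \<Longrightarrow> refines Q' Q"
  shows "kreweras n P = Q"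
  unfolding kreweras_def
proof (rule the_equality)
  show "Q \<in> NCP n \<and> noncrossing (interleave P Q) \<and>
      (\<forall>Q'\<in>NCP n. noncrossing (interleave P Q') \<longrightarrow> refines Q' Q)"
    using assms by blast
  show "Q' = Q" if "Q' \<in> NCP n \<and> noncrossing (interleave P Q') \<and>
      (\<forall>Q''\<in>NCP n. noncrossing (interleave P Q'') \<longrightarrow> refines Q'' Q')" for Q'
    using that assms refines_antisym unfolding NCP_def by blast
qed

lemma kreweras_blocks_odd_rel: "kreweras (nodes t) (blocks (odd_rel t)) = blocks (even_rel t)"
proof (rule kreweras_eqI)
  let ?n = "nodes t"
  have odd: "equiv_upto ?n (odd_rel t)"
    and even: "equiv_upto ?n (even_rel t)" "noncrossing_rel (even_rel t)"
    using odd_even_rel_equiv_noncrossing by auto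
  show "blocks (even_rel t) \<in> NCP ?n" using blocks_in_NCP[OF even] .
  have "noncrossing_rel (rel_interleave (odd_rel t) (even_rel t))"
    using phi_rel_equiv_noncrossing[of "R t"] by (simp add: phi_rel_R)
  then show "noncrossing (interleave (blocks (odd_rel t)) (blocks (even_rel t)))"
    using interleave_blocks[OF odd even(1)]
      noncrossing_blocks_iff[OF equiv_upto_rel_interleave[OF odd even(1)]]
    by simp
  fix Q' assume Q': "Q' \<in> NCP ?n" "noncrossing (interleave (blocks (odd_rel t)) Q')"
  let ?q = "same_block Q'"
  have q: "equiv_upto ?n ?q" and "blocks ?q = Q'" using NCP_same_block[OF Q'(1)] by auto
  then have nc: "noncrossing_rel (rel_interleave (odd_rel t) ?q)"
    using Q'(2) interleave_blocks[OF odd q]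
      noncrossing_blocks_iff[OF equiv_upto_rel_interleave[OF odd q]]
    by simp
  have "even_rel t i j" if "?q i j" "i \<le> j" for i j
    using saturated_if_noncrossing_interleave[OF odd nc that] odd_even_rel_if_saturated[of t]
      equiv_upto_dom[OF q that(1)] that(2) by blast
  then have "even_rel t i j" if "?q i j" for i j
    using that equiv_upto_sym[OF q] equiv_upto_sym[OF even(1)] by (cases "i \<le> j") auto
  then show "refines Q' (blocks (even_rel t))"
    using refines_blocks_iff[OF q even(1)] \<open>blocks ?q = Q'\<close> by simp
qed

section \<open>Every noncrossing partition arises from a tree\<close>

definition rel_slice :: "nat \<Rightarrow> nat \<Rightarrow> nrel \<Rightarrow> nrel" where
  "rel_slice k l r x y \<longleftrightarrow> 1 \<le> x \<and> x \<le> l \<and> 1 \<le> y \<and> y \<le> l \<and> r (x + k) (y + k)"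

lemma equiv_upto_rel_slice:
  assumes r: "equiv_upto n r" and "k + l \<le> n"
  shows "equiv_upto l (rel_slice k l r)"
proof (rule equiv_uptoI)
  show "rel_slice k l r i i" if "1 \<le> i" "i \<le> l" for i
    using that assms equiv_upto_refl[OF r, of "i + k"] by (simp add: rel_slice_def)
  show "rel_slice k l r j i" if "rel_slice k l r i j" for i j
    using that equiv_upto_sym[OF r] unfolding rel_slice_def by blast
  show "rel_slice k l r i i'" if "rel_slice k l r i j" "rel_slice k l r j i'" for i j i'
    using that equiv_upto_trans[OF r] unfolding rel_slice_def by blast
qed (simp add: rel_slice_def)

lemma noncrossing_rel_slice: "noncrossing_rel r \<Longrightarrow> noncrossing_rel (rel_slice k l r)"
  unfolding noncrossing_rel_def rel_slice_def by (meson add_less_mono1)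

lemma rel_slice_slice: "k + l \<le> l' \<Longrightarrow> rel_slice k l (rel_slice k' l' r) = rel_slice (k + k') l r"
  by (auto simp: fun_eq_iff rel_slice_def add.assoc)

lemma rel_concat_rel_slice:
  assumes r: "equiv_upto n r" and "m \<le> n" and closed: "\<And>i j. r i j \<Longrightarrow> i \<le> m \<Longrightarrow> j \<le> m"
  shows "rel_concat m (rel_slice 0 m r) (rel_slice m (n - m) r) = r"
proof (intro ext)
  fix i j
  consider "i \<le> m" "j \<le> m" | "m < i" "m < j" | "i \<le> m" "m < j" | "m < i" "j \<le> m" by linarith
  then show "rel_concat m (rel_slice 0 m r) (rel_slice m (n - m) r) i j = r i j"
  proof cases
    case 3
    then show ?thesis using closed[of i j] by (auto simp: rel_concat_def)
  next
    case 4
    then show ?thesis using closed[of j i] equiv_upto_sym[OF r, of i j]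
      by (auto simp: rel_concat_def)
  qed (use equiv_upto_dom[OF r, of i j] \<open>m \<le> n\<close> in \<open>auto simp: rel_concat_def rel_slice_def\<close>)
qed

lemma bar_ustar_rel_rel_slice:
  assumes r: "equiv_upto (Suc l) r" and "r 1 (Suc l)"
  shows "bar_ustar_rel l (rel_slice 1 l r) = r"
proof (intro ext)
  fix i j
  have "r i 1 \<longleftrightarrow> r i (Suc l)" "r 1 j \<longleftrightarrow> r j (Suc l)"
    using assms equiv_upto_sym equiv_upto_trans by metis+
  then show "bar_ustar_rel l (rel_slice 1 l r) i j = r i j"
    using equiv_upto_dom[OF r, of i j] equiv_upto_refl[OF r, of 1]
    by (cases "i = 1"; cases "j = 1") (auto simp: bar_ustar_rel_def rel_slice_def)
qed

lemma odd_rel_decomposition: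
  assumes r: "equiv_upto n r" and nc: "noncrossing_rel r" and "0 < n"
  obtains a where "a < n"
    and "r = rel_concat (Suc a) (bar_ustar_rel a (rel_slice 1 a r))
      (rel_slice (Suc a) (n - Suc a) r)"
proof -
  define m where "m = Max {j. r 1 j}"
  have "{j. r 1 j} \<subseteq> {..n}" using equiv_upto_dom(4)[OF r] by blast
  then have fin: "finite {j. r 1 j}" by (rule finite_subset) simp
  have "r 1 1" using equiv_upto_refl[OF r] \<open>0 < n\<close> by simp
  then have "r 1 m" and m_max: "\<And>j. r 1 j \<Longrightarrow> j \<le> m"
    using Max_in[OF fin] Max_ge[OF fin] unfolding m_def by blast+
  then have "1 \<le> m" "m \<le> n" using equiv_upto_dom[OF r] by blast+
  have closed: "j \<le> m" if "r i j" "i \<le> m" for i j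
  proof (cases "r 1 i")
    case True
    then show ?thesis using m_max equiv_upto_trans[OF r] that(1) by blast
  next
    case False
    then have "i \<noteq> 1" "i \<noteq> m" using \<open>r 1 1\<close> \<open>r 1 m\<close> by auto
    then have "1 < i" "i < m" using equiv_upto_dom(1)[OF r that(1)] that(2) by auto
    then show ?thesis using noncrossing_rel_inside[OF r nc \<open>r 1 m\<close> _ _ that(1) False] by simp
  qed
  define a where "a = m - 1"
  have m: "m = Suc a" using \<open>1 \<le> m\<close> a_def by simp
  have head: "equiv_upto (Suc a) (rel_slice 0 m r)" "rel_slice 0 m r 1 (Suc a)"
    using equiv_upto_rel_slice[OF r, of 0 m] \<open>m \<le> n\<close> \<open>r 1 m\<close> m by (simp_all add: rel_slice_def)
  have "r = rel_concat m (rel_slice 0 m r) (rel_slice m (n - m) r)"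
    using rel_concat_rel_slice[OF r \<open>m \<le> n\<close> closed] by simp
  also have "rel_slice 0 m r = bar_ustar_rel a (rel_slice 1 a r)"
    using bar_ustar_rel_rel_slice[OF head] rel_slice_slice[of 1 a m 0 r] m by simp
  finally have "r = rel_concat (Suc a) (bar_ustar_rel a (rel_slice 1 a r))
      (rel_slice (Suc a) (n - Suc a) r)"
    unfolding m .
  moreover have "a < n" using \<open>m \<le> n\<close> m by simp
  ultimately show ?thesis using that by blast
qed

lemma even_rel_decomposition:
  assumes r: "equiv_upto n r" and nc: "noncrossing_rel r" and "0 < n"
  obtains a b where "a + Suc b = n"
    and "r = rel_concat a (rel_slice 0 a r) (bar_ustar_rel b (rel_slice (Suc a) b r))"
proof -
  define m where "m = Min {j. r j n}"
  have "{j. r j n} \<subseteq> {..n}" using equiv_upto_dom(2)[OF r] by blast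
  then have fin: "finite {j. r j n}" by (rule finite_subset) simp
  have "r n n" using equiv_upto_refl[OF r] \<open>0 < n\<close> by simp
  then have "r m n" and m_min: "\<And>j. r j n \<Longrightarrow> m \<le> j"
    using Min_in[OF fin] Min_le[OF fin] unfolding m_def by blast+
  then have "1 \<le> m" "m \<le> n" using equiv_upto_dom[OF r] by blast+
  define a where "a = m - 1"
  have m: "m = Suc a" using \<open>1 \<le> m\<close> a_def by simp
  have closed: "j \<le> a" if "r i j" "i \<le> a" for i j
  proof (rule ccontr)
    assume "\<not> j \<le> a"
    have "\<not> r i n" using m_min that(2) m by fastforce
    then have "\<not> r j n" "\<not> r m j"
      using that(1) \<open>r m n\<close> equiv_upto_sym[OF r] equiv_upto_trans[OF r] by blast+
    moreover have "r m m" "r n n" using \<open>r m n\<close> equiv_upto_sym[OF r] equiv_upto_trans[OF r]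
      by blast+
    ultimately have "j \<noteq> m" "j \<noteq> n" by auto
    then have "m < j" "j < n" using \<open>\<not> j \<le> a\<close> m equiv_upto_dom(4)[OF r that(1)] by auto
    then show False
      using noncrossing_rel_inside[OF r nc \<open>r m n\<close> _ _ equiv_upto_sym[OF r that(1)] \<open>\<not> r m j\<close>]
        that(2) m
      by simp
  qed
  define b where "b = n - m"
  have tail: "equiv_upto (Suc b) (rel_slice a (Suc b) r)" "rel_slice a (Suc b) r 1 (Suc b)"
    using equiv_upto_rel_slice[OF r, of a "Suc b"] \<open>m \<le> n\<close> \<open>r m n\<close> m
    by (simp_all add: b_def rel_slice_def)
  have "a \<le> n" "n - a = Suc b" using \<open>m \<le> n\<close> m by (simp_all add: b_def)
  then have "r = rel_concat a (rel_slice 0 a r) (rel_slice a (Suc b) r)"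
    using rel_concat_rel_slice[OF r \<open>a \<le> n\<close> closed] by simp
  also have "rel_slice a (Suc b) r = bar_ustar_rel b (rel_slice (Suc a) b r)"
    using bar_ustar_rel_rel_slice[OF tail] rel_slice_slice[of 1 b "Suc b" a r] by simp
  finally have "r = rel_concat a (rel_slice 0 a r) (bar_ustar_rel b (rel_slice (Suc a) b r))" .
  moreover have "a + Suc b = n" using \<open>n - a = Suc b\<close> \<open>a \<le> n\<close> by simp
  ultimately show ?thesis using that by blast
qed

lemma ex_tree_odd_rel_even_rel:
  assumes "equiv_upto n r" "noncrossing_rel r"
  shows "(\<exists>t. nodes t = n \<and> odd_rel t = r) \<and> (\<exists>t. nodes t = n \<and> even_rel t = r)"
  using assms
proof (induction n arbitrary: r rule: less_induct)
  case (less n)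
  note r = less.prems(1) and nc = less.prems(2)
  show ?case
  proof (cases "n = 0")
    case True
    then have "r = (\<lambda>_ _. False)" using r equiv_upto_0_iff by simp
    then show ?thesis using True by (metis nodes.simps(1) odd_rel.simps(1) even_rel.simps(1))
  next
    case False
    have slice: "equiv_upto l (rel_slice k l r)" "noncrossing_rel (rel_slice k l r)"
      if "k + l \<le> n" for k l
      using equiv_upto_rel_slice[OF r that] noncrossing_rel_slice[OF nc] by blast+
    obtain a where "a < n"
      and "r = rel_concat (Suc a) (bar_ustar_rel a (rel_slice 1 a r))
        (rel_slice (Suc a) (n - Suc a) r)"
      using odd_rel_decomposition[OF r nc] False by blast
    moreover obtain s where "nodes s = a" "even_rel s = rel_slice 1 a r"
      using less.IH[OF _ slice, of a 1] \<open>a < n\<close> by auto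
    moreover obtain t where "nodes t = n - Suc a" "odd_rel t = rel_slice (Suc a) (n - Suc a) r"
      using less.IH[OF _ slice, of "n - Suc a" "Suc a"] \<open>a < n\<close> by auto
    ultimately have "nodes (Node s t) = n \<and> odd_rel (Node s t) = r" by simp
    obtain a' b where "a' + Suc b = n"
      and "r = rel_concat a' (rel_slice 0 a' r) (bar_ustar_rel b (rel_slice (Suc a') b r))"
      using even_rel_decomposition[OF r nc] False by blast
    moreover obtain s' where "nodes s' = a'" "odd_rel s' = rel_slice 0 a' r"
      using less.IH[OF _ slice, of a' 0] \<open>a' + Suc b = n\<close> by auto
    moreover obtain t' where "nodes t' = b" "even_rel t' = rel_slice (Suc a') b r"
      using less.IH[OF _ slice, of b "Suc a'"] \<open>a' + Suc b = n\<close> by auto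
    ultimately have "nodes (Node s' t') = n \<and> even_rel (Node s' t') = r" by simp
    with \<open>nodes (Node s t) = n \<and> odd_rel (Node s t) = r\<close> show ?thesis by blast
  qed
qed

lemma phi_R_eq_interleave_kreweras:
  "phi (R t) = interleave (blocks (odd_rel t)) (kreweras (nodes t) (blocks (odd_rel t)))"
proof -
  have odd: "equiv_upto (nodes t) (odd_rel t)" and even: "equiv_upto (nodes t) (even_rel t)"
    using odd_even_rel_equiv_noncrossing by auto
  have "phi (R t) = blocks (rel_interleave (odd_rel t) (even_rel t))"
    by (simp add: phi_eq_blocks_phi_rel phi_rel_R)
  also have "\<dots> = interleave (blocks (odd_rel t)) (blocks (even_rel t))"
    using interleave_blocks[OF odd even] by simp
  finally show ?thesis by (simp add: kreweras_blocks_odd_rel)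
qed

theorem proposition3:
  fixes n :: nat
  shows "(\<lambda>t. phi (R t)) ` Y n = (\<lambda>P. interleave P (kreweras n P)) ` NCP n"
proof
  show "(\<lambda>t. phi (R t)) ` Y n \<subseteq> (\<lambda>P. interleave P (kreweras n P)) ` NCP n"
  proof
    fix X assume "X \<in> (\<lambda>t. phi (R t)) ` Y n"
    then obtain t where "nodes t = n" "X = phi (R t)" unfolding Y_def by auto
    moreover have "blocks (odd_rel t) \<in> NCP (nodes t)"
      using blocks_in_NCP odd_even_rel_equiv_noncrossing by blast
    ultimately show "X \<in> (\<lambda>P. interleave P (kreweras n P)) ` NCP n"
      by (auto simp: phi_R_eq_interleave_kreweras)
  qed
  show "(\<lambda>P. interleave P (kreweras n P)) ` NCP n \<subseteq> (\<lambda>t. phi (R t)) ` Y n"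
  proof
    fix X assume "X \<in> (\<lambda>P. interleave P (kreweras n P)) ` NCP n"
    then obtain P where P: "P \<in> NCP n" "X = interleave P (kreweras n P)" by auto
    then obtain t where "nodes t = n" "odd_rel t = same_block P"
      using ex_tree_odd_rel_even_rel NCP_same_block(1,2) by blast
    then have "X = phi (R t)" "t \<in> Y n"
      using P NCP_same_block(3)[OF P(1)] by (simp_all add: phi_R_eq_interleave_kreweras Y_def)
    then show "X \<in> (\<lambda>t. phi (R t)) ` Y n" by blast
  qed
qed

end
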